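(* Let $f:\mathbb{R}^2\to[0,\infty)$ be a specified bivariate Lebesgue probability density function satisfying $f(z_1,z_2)=f(z_2,z_1)=f(-z_1,-z_2)$ for all $(z_1,z_2)\in\mathbb{R}^2$. Let $\mathbf{X}=(X_1,X_2)$ have density $f(x_1-\theta_1,x_2-\theta_2)$, where the unknown $\boldsymbol\theta=(\theta_1,\theta_2)$ lies in $\Theta_0=\{(\theta_1,\theta_2):-\infty<\theta_1\le\theta_2<\infty\}$. Let $W:\mathbb{R}\to[0,\infty)$ be absolutely continuous with $W(0)=0$, $W(t)=W(-t)$ for all $t$, $W$ strictly decreasing on $(-\infty,0)$ and strictly increasing on $(0,\infty)$, and $W'$ increasing almost everywhere. Consider the loss $L(\boldsymbol\theta,\mathbf a)=W(a_1-\theta_1)+W(a_2-\theta_2)$, $\mathbf a\in\mathbb{R}^2$, with risk $R(\boldsymbol\theta,\boldsymbol\delta)=E_{\boldsymbol\theta}[L(\boldsymbol\theta,\boldsymbol\delta(\mathbf X))]$. Let $D=X_2-X_1$, $\boldsymbol\delta_0(\mathbf X)=(X_1,X_2)$, and for $\psi:\mathbb{R}\to\mathbb{R}$ let $\boldsymbol\delta_\psi(\mathbf X)=(X_1-\psi(D),X_2+\psi(D))$. Suppose $\lim_{t\to\infty}\psi(t)=0$ and that one of the following holds: (a) $\psi$ is decreasing and $\displaystyle\int_{-\infty}^{\infty}\int_{-\infty}^{t}W'(s-\psi(t))\,f(s,s+y)\,dy\,ds\ge 0$ for all $t\in\mathbb{R}$; or (b) $\psi$ is increasing and $\displaystyle\int_{-\infty}^{\infty}\int_{-\infty}^{t}W'(s-\psi(t))\,f(s,s+y)\,dy\,ds\le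 0$ for all $t\in\mathbb{R}$. Then $R(\boldsymbol\theta,\boldsymbol\delta_\psi)\le R(\boldsymbol\theta,\boldsymbol\delta_0)$ for all $\boldsymbol\theta\in\Theta_0$. *)

theory Defs
  imports "HOL-Analysis.Analysis"
begin

definition abs_cont_on_interval :: "(real \<Rightarrow> real) \<Rightarrow> real \<Rightarrow> real \<Rightarrow> bool" where
  "abs_cont_on_interval W a b \<longleftrightarrow>
     (\<forall>\<epsilon>>0. \<exists>\<delta>>0. \<forall>(n::nat) (l::nat \<Rightarrow> real) (r::nat \<Rightarrow> real).
        (\<forall>i<n. a \<le> l i \<and> l i \<le> r i \<and> r i \<le> b) \<and>
        (\<forall>i<n. \<forall>j<n. i \<noteq> j \<longrightarrow> r i \<le> l j \<or> r j \<le> l i) \<and>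
        (\<Sum>i<n. r i - l i) < \<delta>
        \<longrightarrow> (\<Sum>i<n. \<bar>W (r i) - W (l i)\<bar>) < \<epsilon>)"

definition abs_cont :: "(real \<Rightarrow> real) \<Rightarrow> bool" where
  "abs_cont W \<longleftrightarrow> (\<forall>a b. a \<le> b \<longrightarrow> abs_cont_on_interval W a b)"

definition loss :: "(real \<Rightarrow> real) \<Rightarrow> real \<times> real \<Rightarrow> real \<times> real \<Rightarrow> real" where
  "loss W \<theta> a = W (fst a - fst \<theta>) + W (snd a - snd \<theta>)"

text \<open>Risk R(theta, delta) = E_theta[L(theta, delta(X))], X with density f(x1-theta1, x2-theta2).
  The loss is nonnegative, so the expectation is a nonnegative (possibly infinite) integral.\<close>
definition risk :: "(real \<times> real \<Rightarrow> real) \<Rightarrow> (real \<Rightarrow> real) \<Rightarrow> real \<times> real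
                     \<Rightarrow> (real \<times> real \<Rightarrow> real \<times> real) \<Rightarrow> ennreal" where
  "risk f W \<theta> \<delta> = (\<integral>\<^sup>+ x. ennreal (loss W \<theta> (\<delta> x)) * ennreal (f (fst x - fst \<theta>, snd x - snd \<theta>)) \<partial>lborel)"

definition delta0 :: "real \<times> real \<Rightarrow> real \<times> real" where
  "delta0 x = (fst x, snd x)"

definition delta_psi :: "(real \<Rightarrow> real) \<Rightarrow> real \<times> real \<Rightarrow> real \<times> real" where
  "delta_psi \<psi> x = (let D = snd x - fst x in (fst x - \<psi> D, snd x + \<psi> D))"

definition inner_int :: "(real \<times> real \<Rightarrow> real) \<Rightarrow> real \<Rightarrow> real \<Rightarrow> ennreal" where
  "inner_int f t s = (\<integral>\<^sup>+ y \<in> {..t}. ennreal (f (s, s + y)) \<partial>lborel)"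

text \<open>Positive and negative parts of the double integral
  int_{-inf}^{inf} int_{-inf}^t W'(s - psi t) f(s, s+y) dy ds.\<close>
definition dint_pos :: "(real \<times> real \<Rightarrow> real) \<Rightarrow> (real \<Rightarrow> real) \<Rightarrow> (real \<Rightarrow> real) \<Rightarrow> real \<Rightarrow> ennreal" where
  "dint_pos f W' \<psi> t = (\<integral>\<^sup>+ s. ennreal (max 0 (W' (s - \<psi> t))) * inner_int f t s \<partial>lborel)"

definition dint_neg :: "(real \<times> real \<Rightarrow> real) \<Rightarrow> (real \<Rightarrow> real) \<Rightarrow> (real \<Rightarrow> real) \<Rightarrow> real \<Rightarrow> ennreal" where
  "dint_neg f W' \<psi> t = (\<integral>\<^sup>+ s. ennreal (max 0 (- W' (s - \<psi> t))) * inner_int f t s \<partial>lborel)"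

text \<open>The double integral (as an extended real, existing) is >= 0, resp. <= 0.\<close>
definition dint_nonneg :: "(real \<times> real \<Rightarrow> real) \<Rightarrow> (real \<Rightarrow> real) \<Rightarrow> (real \<Rightarrow> real) \<Rightarrow> real \<Rightarrow> bool" where
  "dint_nonneg f W' \<psi> t \<longleftrightarrow> dint_neg f W' \<psi> t < \<infinity> \<and> dint_neg f W' \<psi> t \<le> dint_pos f W' \<psi> t"

definition dint_nonpos :: "(real \<times> real \<Rightarrow> real) \<Rightarrow> (real \<Rightarrow> real) \<Rightarrow> (real \<Rightarrow> real) \<Rightarrow> real \<Rightarrow> bool" where
  "dint_nonpos f W' \<psi> t \<longleftrightarrow> dint_pos f W' \<psi> t < \<infinity> \<and> dint_pos f W' \<psi> t \<le> dint_neg f W' \<psi> t"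

end

(*
  Write s = X1 - theta1 and y = (X2 - theta2) - (X1 - theta1), so that D = eta + y with
  eta = theta2 - theta1 >= 0. The symmetries of f and W make both coordinates of delta_psi contribute
  the same risk, so it suffices to compare E W(s - psi(eta + y)) with E W(s) (case (a), psi >= 0;
  case (b) reduces to it by reflecting s). By absolute continuity W(s) - W(s - psi) is the integral
  of W'(s - c) over 0 <= c <= psi; exchanging the order of integration, the contribution of a fixed
  shift c is an integral of W'(s - c) over the down-set of all y with c <= psi(eta + y). On every
  half-line y <= t inside that set we have c <= psi(t), so, W' being increasing, the hypothesis at t
  controls its sign. The fundamental theorem of calculus for W comes from the change of variables
  formula together with the Luzin property of absolutely continuous monotone functions.
*)
theory Submission
  imports Defs
begin

section \<open>Absolute continuity\<close>

lemma abs_cont_on_intervalD: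
  assumes "abs_cont_on_interval W a b" "e > 0"
  obtains d where "d > 0"
    "\<And>F (l :: 'i \<Rightarrow> real) r. finite F \<Longrightarrow> (\<forall>C\<in>F. a \<le> l C \<and> l C \<le> r C \<and> r C \<le> b) \<Longrightarrow>
      (\<forall>C\<in>F. \<forall>D\<in>F. C \<noteq> D \<longrightarrow> r C \<le> l D \<or> r D \<le> l C) \<Longrightarrow> (\<Sum>C\<in>F. r C - l C) < d \<Longrightarrow>
      (\<Sum>C\<in>F. \<bar>W (r C) - W (l C)\<bar>) < e"
proof -
  obtain d where "d > 0" and ac: "\<forall>(n::nat) l r. (\<forall>i<n. a \<le> l i \<and> l i \<le> r i \<and> r i \<le> b) \<and>
      (\<forall>i<n. \<forall>j<n. i \<noteq> j \<longrightarrow> r i \<le> l j \<or> r j \<le> l i) \<and> (\<Sum>i<n. r i - l i) < d \<longrightarrow>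
      (\<Sum>i<n. \<bar>W (r i) - W (l i)\<bar>) < e"
    using assms(1)[unfolded abs_cont_on_interval_def, rule_format, OF assms(2)] by blast
  show thesis
  proof (rule that[OF \<open>d > 0\<close>])
    fix F :: "'i set" and l r
    assume "finite F" and bounds: "\<forall>C\<in>F. a \<le> l C \<and> l C \<le> r C \<and> r C \<le> b"
      and sep: "\<forall>C\<in>F. \<forall>D\<in>F. C \<noteq> D \<longrightarrow> r C \<le> l D \<or> r D \<le> l C"
      and small: "(\<Sum>C\<in>F. r C - l C) < d"
    obtain h where h: "bij_betw h {..<card F} F"
      using ex_bij_betw_nat_finite[OF \<open>finite F\<close>] atLeast0LessThan by metis
    have reindex: "(\<Sum>i<card F. u (h i)) = (\<Sum>C\<in>F. u C)" for u :: "'i \<Rightarrow> real"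
      using sum.reindex_bij_betw[OF h] .
    have hF: "h i \<in> F" if "i < card F" for i
      using h that by (auto simp: bij_betw_def)
    have h_inj: "h i \<noteq> h j" if "i < card F" "j < card F" "i \<noteq> j" for i j
      using h that by (auto simp: bij_betw_def inj_on_def)
    have "(\<Sum>i<card F. \<bar>W (r (h i)) - W (l (h i))\<bar>) < e"
    proof (rule ac[rule_format], intro conjI allI impI)
      show "a \<le> l (h i)" "l (h i) \<le> r (h i)" "r (h i) \<le> b" if "i < card F" for i
        using bounds hF[OF that] by blast+
      show "r (h i) \<le> l (h j) \<or> r (h j) \<le> l (h i)" if "i < card F" "j < card F" "i \<noteq> j" for i j
        using sep hF[OF that(1)] hF[OF that(2)] h_inj[OF that] by blast
      show "(\<Sum>i<card F. r (h i) - l (h i)) < d"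
        using small reindex[of "\<lambda>C. r C - l C"] by simp
    qed
    then show "(\<Sum>C\<in>F. \<bar>W (r C) - W (l C)\<bar>) < e"
      using reindex[of "\<lambda>C. \<bar>W (r C) - W (l C)\<bar>"] by simp
  qed
qed

lemma abs_cont_imp_isCont:
  assumes "abs_cont W"
  shows "isCont W x"
  unfolding continuous_at_eps_delta
proof (intro allI impI)
  fix e :: real
  assume "e > 0"
  have ac_x: "abs_cont_on_interval W (x - 1) (x + 1)"
    using assms unfolding abs_cont_def by simp
  obtain d where "d > 0" and ac: "\<And>F (l :: unit \<Rightarrow> real) r. finite F \<Longrightarrow>
      (\<forall>C\<in>F. x - 1 \<le> l C \<and> l C \<le> r C \<and> r C \<le> x + 1) \<Longrightarrow>
      (\<forall>C\<in>F. \<forall>D\<in>F. C \<noteq> D \<longrightarrow> r C \<le> l D \<or> r D \<le> l C) \<Longrightarrow> (\<Sum>C\<in>F. r C - l C) < d \<Longrightarrow>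
      (\<Sum>C\<in>F. \<bar>W (r C) - W (l C)\<bar>) < e"
    by (rule abs_cont_on_intervalD[OF ac_x \<open>e > 0\<close>]) blast
  have "dist (W y) (W x) < e" if "dist y x < min d 1" for y
  proof -
    have "\<bar>W (max x y) - W (min x y)\<bar> < e"
      using ac[of "{()}" "\<lambda>_. min x y" "\<lambda>_. max x y"] that
      by (auto simp: dist_real_def abs_less_iff min_def max_def split: if_splits)
    then show ?thesis
      by (cases "x \<le> y") (auto simp: dist_real_def abs_minus_commute)
  qed
  then show "\<exists>d>0. \<forall>y. dist y x < d \<longrightarrow> dist (W y) (W x) < e"
    using \<open>d > 0\<close> by (intro exI[of _ "min d 1"]) auto
qed

lemma abs_cont_on_interval_reflect:
  assumes "abs_cont_on_interval W (- b) (- a)"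
  shows "abs_cont_on_interval (\<lambda>x. W (- x)) a b"
  unfolding abs_cont_on_interval_def
proof (intro allI impI)
  fix e :: real
  assume "e > 0"
  then obtain d where "d > 0" and ac: "\<forall>(n::nat) l r. (\<forall>i<n. - b \<le> l i \<and> l i \<le> r i \<and> r i \<le> - a) \<and>
      (\<forall>i<n. \<forall>j<n. i \<noteq> j \<longrightarrow> r i \<le> l j \<or> r j \<le> l i) \<and> (\<Sum>i<n. r i - l i) < d \<longrightarrow>
      (\<Sum>i<n. \<bar>W (r i) - W (l i)\<bar>) < e"
    using assms unfolding abs_cont_on_interval_def by blast
  show "\<exists>d>0. \<forall>(n::nat) l r. (\<forall>i<n. a \<le> l i \<and> l i \<le> r i \<and> r i \<le> b) \<and>
      (\<forall>i<n. \<forall>j<n. i \<noteq> j \<longrightarrow> r i \<le> l j \<or> r j \<le> l i) \<and> (\<Sum>i<n. r i - l i) < d \<longrightarrow>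
      (\<Sum>i<n. \<bar>W (- r i) - W (- l i)\<bar>) < e"
  proof (intro exI[of _ d] conjI allI impI \<open>d > 0\<close>)
    fix n :: nat and l r :: "nat \<Rightarrow> real"
    assume "(\<forall>i<n. a \<le> l i \<and> l i \<le> r i \<and> r i \<le> b) \<and>
      (\<forall>i<n. \<forall>j<n. i \<noteq> j \<longrightarrow> r i \<le> l j \<or> r j \<le> l i) \<and> (\<Sum>i<n. r i - l i) < d"
    then have "(\<Sum>i<n. \<bar>W (- l i) - W (- r i)\<bar>) < e"
      using ac[rule_format, of n "\<lambda>i. - r i" "\<lambda>i. - l i"] by (auto simp: sum_subtractf)
    then show "(\<Sum>i<n. \<bar>W (- r i) - W (- l i)\<bar>) < e"
      by (simp add: abs_minus_commute)
  qed
qed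

lemma abs_cont_reflect: "abs_cont W \<Longrightarrow> abs_cont (\<lambda>x. W (- x))"
  unfolding abs_cont_def by (auto intro: abs_cont_on_interval_reflect)

section \<open>The Luzin property and the fundamental theorem of calculus\<close>

lemma component_eq_greaterThanLessThan:
  fixes U :: "real set"
  assumes "open U" "U \<subseteq> {a..b}" "C \<in> components U"
  shows "C = {Inf C<..<Sup C}" "Inf C < Sup C" "a \<le> Inf C" "Sup C \<le> b"
proof -
  have C: "open C" "is_interval C" "C \<noteq> {}" "C \<subseteq> {a..b}"
    using open_components[OF assms(1,3)] in_components_connected[OF assms(3)]
      in_components_nonempty[OF assms(3)] in_components_subset[OF assms(3)] assms(2)
    by (auto simp: is_interval_connected_1)
  have bdd: "bdd_below C" "bdd_above C"
    using bounded_subset[OF bounded_closed_interval C(4)] bounded_imp_bdd_below bounded_imp_bdd_above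
    by auto
  have "Inf C \<notin> C" "Sup C \<notin> C"
    using Inf_notin_open[of C "a - 1"] Sup_notin_open[of C "b + 1"] C(1,4) by force+
  moreover have "{Inf C<..<Sup C} \<subseteq> C"
  proof
    fix y assume "y \<in> {Inf C<..<Sup C}"
    then obtain p q where "p \<in> C" "p < y" "q \<in> C" "y < q"
      using cInf_less_iff[OF C(3) bdd(1)] less_cSup_iff[OF C(3) bdd(2)] by auto
    then show "y \<in> C"
      using mem_is_interval_1_I[OF C(2)] by (meson less_imp_le)
  qed
  moreover have "C \<subseteq> {Inf C..Sup C}"
    using bdd by (auto intro: cInf_lower cSup_upper)
  ultimately show "C = {Inf C<..<Sup C}"
    by (auto simp: subset_iff order.order_iff_strict)
  then show "Inf C < Sup C"
    using C(3) by (metis greaterThanLessThan_empty_iff not_less)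
  show "a \<le> Inf C" "Sup C \<le> b"
    using C(3,4) by (auto intro!: cInf_greatest cSup_least)
qed

lemma components_separated:
  fixes U :: "real set"
  assumes "open U" "U \<subseteq> {a..b}" "C \<in> components U" "D \<in> components U" "C \<noteq> D"
  shows "Sup C \<le> Inf D \<or> Sup D \<le> Inf C"
proof (rule ccontr)
  assume "\<not> ?thesis"
  moreover note C = component_eq_greaterThanLessThan[OF assms(1,2,3)]
    and D = component_eq_greaterThanLessThan[OF assms(1,2,4)]
  ultimately have "(max (Inf C) (Inf D) + min (Sup C) (Sup D)) / 2 \<in> {Inf C<..<Sup C} \<inter> {Inf D<..<Sup D}"
    by (auto simp: max_def min_def)
  then have "C \<inter> D \<noteq> {}"
    using C(1) D(1) by blast
  moreover have "C \<inter> D = {}"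
    using pairwise_disjoint_components[of U] assms(3-5) by (auto simp: pairwise_def disjnt_def)
  ultimately show False
    by simp
qed

lemma sum_component_lengths_le_measure:
  fixes U :: "real set"
  assumes "open U" "U \<subseteq> {a..b}" "finite F" "F \<subseteq> components U"
  shows "(\<Sum>C\<in>F. Sup C - Inf C) \<le> measure lebesgue U"
proof -
  have C_meas: "C \<in> lmeasurable" if "C \<in> F" for C
    using that assms(1,2,4) open_components[OF assms(1)] in_components_subset
    by (intro lmeasurable_open bounded_subset[OF bounded_closed_interval]) blast+
  have "(\<Sum>C\<in>F. Sup C - Inf C) = (\<Sum>C\<in>F. measure lebesgue C)"
  proof (rule sum.cong)
    fix C assume "C \<in> F"
    then have "C = {Inf C<..<Sup C}" "Inf C < Sup C"
      using component_eq_greaterThanLessThan[OF assms(1,2)] assms(4) by blast+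
    moreover have "measure lebesgue {Inf C<..<Sup C} = Sup C - Inf C"
      using \<open>Inf C < Sup C\<close> by (simp add: measure_completion measure_lborel_Ioo)
    ultimately show "Sup C - Inf C = measure lebesgue C"
      by simp
  qed simp
  also have "\<dots> = measure lebesgue (\<Union>C\<in>F. C)"
  proof (rule measure_finite_Union[symmetric])
    show "finite F"
      by fact
    show "disjoint_family_on (\<lambda>C. C) F"
      using pairwise_disjoint_components[of U] assms(4)
      by (auto simp: disjoint_family_on_def pairwise_def disjnt_def)
    show "(\<lambda>C. C) ` F \<subseteq> sets lebesgue"
      using C_meas by (auto intro: fmeasurableD)
    show "emeasure lebesgue C \<noteq> \<infinity>" if "C \<in> F" for C
      using emeasure_eq_measure2[OF C_meas[OF that]] by simp
  qed
  also have "\<dots> \<le> measure lebesgue U"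
  proof (rule measure_mono_fmeasurable)
    show "(\<Union>C\<in>F. C) \<subseteq> U"
      using assms(4) Union_components[of U] by blast
    show "(\<Union>C\<in>F. C) \<in> sets lebesgue"
      using C_meas assms(3) by (auto intro: fmeasurableD)
    show "U \<in> lmeasurable"
      using assms(1,2) by (intro lmeasurable_open bounded_subset[OF bounded_closed_interval])
  qed
  finally show ?thesis .
qed

lemma negligible_imp_small_open_superset:
  fixes Z :: "'a::euclidean_space set"
  assumes "negligible Z" "Z \<subseteq> V" "open V" "bounded V" "d > 0"
  obtains U where "open U" "Z \<subseteq> U" "U \<subseteq> V" "U \<in> lmeasurable" "measure lebesgue U < d"
proof -
  have Z: "Z \<in> null_sets lebesgue"
    using assms(1) negligible_iff_null_sets by blast
  obtain T where "open T" "Z \<subseteq> T" "T - Z \<in> lmeasurable" "emeasure lebesgue (T - Z) < ennreal d"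
    using sets_lebesgue_outer_open[OF null_setsD2[OF Z] \<open>d > 0\<close>] by blast
  show thesis
  proof (rule that[of "T \<inter> V"])
    show U: "T \<inter> V \<in> lmeasurable"
      using assms(3,4) \<open>open T\<close> by (intro lmeasurable_open) auto
    have "(T - Z) \<union> Z \<in> lmeasurable"
      by (rule fmeasurable.Un[OF \<open>T - Z \<in> lmeasurable\<close> fmeasurableI_null_sets[OF Z]])
    then have "measure lebesgue (T \<inter> V) \<le> measure lebesgue ((T - Z) \<union> Z)"
      using U by (intro measure_mono_fmeasurable) (auto intro: fmeasurableD)
    also have "\<dots> = measure lebesgue (T - Z)"
      using \<open>T - Z \<in> lmeasurable\<close> Z by (intro measure_Un_null_set) (auto intro: fmeasurableD)
    also have "\<dots> < d"
      using \<open>emeasure lebesgue (T - Z) < ennreal d\<close> \<open>T - Z \<in> lmeasurable\<close> \<open>d > 0\<close>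
      by (simp add: emeasure_eq_measure2 ennreal_less_iff)
    finally show "measure lebesgue (T \<inter> V) < d" .
  qed (use \<open>open T\<close> \<open>Z \<subseteq> T\<close> assms(2,3) in auto)
qed

lemma measure_continuous_image_open_le:
  fixes W :: "'a::euclidean_space \<Rightarrow> 'b::euclidean_space"
  assumes "open U" "continuous_on U W"
    and small: "\<And>K. compact K \<Longrightarrow> K \<subseteq> U \<Longrightarrow> measure lebesgue (W ` K) \<le> e"
  shows "W ` U \<in> lmeasurable" "measure lebesgue (W ` U) \<le> e"
proof -
  obtain K where K: "\<And>n. compact (K n)" "\<And>n. K n \<subseteq> U" "\<And>n. K n \<subseteq> interior (K (Suc n))"
    "\<Union>(range K) = U"
    using open_Union_compact_subsets[OF \<open>open U\<close>] by metis
  have WK: "W ` K n \<in> lmeasurable" for n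
    using continuous_on_subset[OF assms(2) K(2)] K(1) by (intro lmeasurable_compact compact_continuous_image)
  have img: "W ` U = (\<Union>n. W ` K n)"
    using K(4) by blast
  have "incseq (\<lambda>n. W ` K n)"
    using K(3) interior_subset by (intro incseq_SucI image_mono) blast
  then have "emeasure lebesgue (\<Union>n. W ` K n) = (SUP n. emeasure lebesgue (W ` K n))"
    using WK by (intro SUP_emeasure_incseq[symmetric]) (auto intro: fmeasurableD)
  also have "\<dots> \<le> ennreal e"
    using WK small[OF K(1,2)] by (intro SUP_least) (simp add: emeasure_eq_measure2 ennreal_leI)
  finally have le: "emeasure lebesgue (W ` U) \<le> ennreal e"
    by (simp only: img)
  show WU: "W ` U \<in> lmeasurable"
    using WK le by (intro fmeasurableI) (auto simp: img intro: fmeasurableD le_less_trans)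
  have "0 \<le> e"
    using small[of "{}"] by simp
  then show "measure lebesgue (W ` U) \<le> e"
    using le by (simp add: emeasure_eq_measure2[OF WU] ennreal_le_iff)
qed

lemma measure_mono_image_compact_le:
  fixes W :: "real \<Rightarrow> real"
  assumes mono: "mono_on {a..b} W" and cont: "continuous_on {a..b} W"
    and U: "open U" "U \<subseteq> {a..b}" and K: "compact K" "K \<subseteq> U"
    and small: "\<And>F. finite F \<Longrightarrow> F \<subseteq> components U \<Longrightarrow> (\<Sum>C\<in>F. \<bar>W (Sup C) - W (Inf C)\<bar>) \<le> e"
  shows "measure lebesgue (W ` K) \<le> e"
proof -
  note component = component_eq_greaterThanLessThan[OF U]
  obtain F where F: "F \<subseteq> components U" "finite F" "K \<subseteq> \<Union>F"
    using compactE[OF K(1), of "components U"] K(2) open_components[OF U(1)] by auto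
  have W_mono_component: "W (Inf C) \<le> W x \<and> W x \<le> W (Sup C)" if "C \<in> F" "x \<in> C" for C x
  proof -
    have C: "C \<in> components U"
      using F(1) that(1) by blast
    then have "x \<in> {Inf C<..<Sup C}"
      using component(1) that(2) by blast
    then show ?thesis
      using component(3,4)[OF C] by (intro conjI mono_onD[OF mono]) auto
  qed
  have "W ` K \<subseteq> (\<Union>C\<in>F. {W (Inf C)..W (Sup C)})"
  proof
    fix y assume "y \<in> W ` K"
    then obtain x C where "y = W x" "C \<in> F" "x \<in> C"
      using F(3) by blast
    then show "y \<in> (\<Union>C\<in>F. {W (Inf C)..W (Sup C)})"
      using W_mono_component by auto
  qed
  moreover have "W ` K \<in> lmeasurable"
    using K U(2) by (intro lmeasurable_compact compact_continuous_image continuous_on_subset[OF cont]) auto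
  moreover have "(\<Union>C\<in>F. {W (Inf C)..W (Sup C)}) \<in> lmeasurable"
    using F(2) by (intro fmeasurable.finite_UN) auto
  ultimately have "measure lebesgue (W ` K) \<le> measure lebesgue (\<Union>C\<in>F. {W (Inf C)..W (Sup C)})"
    by (intro measure_mono_fmeasurable fmeasurableD)
  also have "\<dots> \<le> (\<Sum>C\<in>F. measure lebesgue {W (Inf C)..W (Sup C)})"
    by (rule measure_UNION_le[OF F(2)]) auto
  also have "\<dots> \<le> (\<Sum>C\<in>F. \<bar>W (Sup C) - W (Inf C)\<bar>)"
    by (intro sum_mono) (auto simp: measure_completion)
  also have "\<dots> \<le> e"
    by (rule small[OF F(2,1)])
  finally show ?thesis .
qed

lemma abs_cont_mono_negligible_image:
  fixes W :: "real \<Rightarrow> real"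
  assumes ac: "abs_cont_on_interval W a b" and mono: "mono_on {a..b} W"
    and cont: "continuous_on {a..b} W" and Z: "Z \<subseteq> {a..b}" "negligible Z"
  shows "negligible (W ` Z)"
  unfolding negligible_outer_le
proof (intro allI impI)
  fix e :: real
  assume "e > 0"
  obtain d where "d > 0" and ac_d: "\<And>F (l :: real set \<Rightarrow> real) r. finite F \<Longrightarrow>
      (\<forall>C\<in>F. a \<le> l C \<and> l C \<le> r C \<and> r C \<le> b) \<Longrightarrow>
      (\<forall>C\<in>F. \<forall>D\<in>F. C \<noteq> D \<longrightarrow> r C \<le> l D \<or> r D \<le> l C) \<Longrightarrow> (\<Sum>C\<in>F. r C - l C) < d \<Longrightarrow>
      (\<Sum>C\<in>F. \<bar>W (r C) - W (l C)\<bar>) < e"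
    by (rule abs_cont_on_intervalD[OF ac \<open>e > 0\<close>]) blast
  have "negligible (Z \<inter> {a<..<b})"
    using Z(2) by (rule negligible_subset) simp
  then obtain U where U: "open U" "Z \<inter> {a<..<b} \<subseteq> U" "U \<subseteq> {a<..<b}" "U \<in> lmeasurable"
    "measure lebesgue U < d"
    by (rule negligible_imp_small_open_superset[OF _ Int_lower2 open_greaterThanLessThan
          bounded_Ioo \<open>d > 0\<close>])
  have Uab: "U \<subseteq> {a..b}"
    using U(3) by auto
  have components_small: "(\<Sum>C\<in>F. \<bar>W (Sup C) - W (Inf C)\<bar>) < e"
    if F: "finite F" "F \<subseteq> components U" for F
  proof (rule ac_d[OF F(1)])
    show "\<forall>C\<in>F. a \<le> Inf C \<and> Inf C \<le> Sup C \<and> Sup C \<le> b"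
      using component_eq_greaterThanLessThan[OF U(1) Uab] F(2) by (meson less_imp_le subsetD)
    show "\<forall>C\<in>F. \<forall>D\<in>F. C \<noteq> D \<longrightarrow> Sup C \<le> Inf D \<or> Sup D \<le> Inf C"
      using components_separated[OF U(1) Uab] F(2) by blast
    show "(\<Sum>C\<in>F. Sup C - Inf C) < d"
      using sum_component_lengths_le_measure[OF U(1) Uab F] U(5) by linarith
  qed
  have compact_image_small: "measure lebesgue (W ` K) \<le> e" if "compact K" "K \<subseteq> U" for K
    using components_small by (intro measure_mono_image_compact_le[OF mono cont U(1) Uab that] less_imp_le)
  have WU: "W ` U \<in> lmeasurable" "measure lebesgue (W ` U) \<le> e"
    using measure_continuous_image_open_le[OF U(1) continuous_on_subset[OF cont Uab] compact_image_small]
    by auto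
  have ends: "{W a, W b} \<in> null_sets lebesgue"
    using negligible_iff_null_sets by blast
  show "\<exists>T. W ` Z \<subseteq> T \<and> T \<in> lmeasurable \<and> measure lebesgue T \<le> e"
  proof (intro exI conjI)
    have "Z \<subseteq> (Z \<inter> {a<..<b}) \<union> {a, b}"
      using Z(1) by (auto simp: less_le)
    then show "W ` Z \<subseteq> W ` U \<union> {W a, W b}"
      using U(2) by blast
    show "W ` U \<union> {W a, W b} \<in> lmeasurable"
      by (rule fmeasurable.Un[OF WU(1) fmeasurableI_null_sets[OF ends]])
    show "measure lebesgue (W ` U \<union> {W a, W b}) \<le> e"
      using WU(2) measure_Un_null_set[OF fmeasurableD[OF WU(1)] ends] by linarith
  qed
qed

lemma mono_on_continuous_image_interval:
  fixes G :: "real \<Rightarrow> real"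
  assumes "continuous_on {a..b} G" "mono_on {a..b} G" "a \<le> b"
  shows "G ` {a..b} = {G a..G b}"
proof
  show "G ` {a..b} \<subseteq> {G a..G b}"
    using assms(2,3) by (auto intro!: mono_onD[OF assms(2)])
  show "{G a..G b} \<subseteq> G ` {a..b}"
  proof
    fix y assume "y \<in> {G a..G b}"
    then obtain x where "a \<le> x" "x \<le> b" "G x = y"
      using IVT'[of G a y b] assms(1,3) by auto
    then show "y \<in> G ` {a..b}"
      by auto
  qed
qed

lemma measure_strict_mono_image_diff_negligible:
  fixes G :: "real \<Rightarrow> real"
  assumes ac: "abs_cont_on_interval G a b" and cont: "continuous_on {a..b} G"
    and smono: "strict_mono_on {a..b} G" and "a \<le> b" and N: "negligible N"
  shows "G ` ({a..b} - N) \<in> lmeasurable" "measure lebesgue (G ` ({a..b} - N)) = G b - G a"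
proof -
  have mono: "mono_on {a..b} G"
    using smono by (rule strict_mono_on_imp_mono_on)
  have inj: "inj_on G {a..b}"
    using smono by (rule strict_mono_on_imp_inj_on)
  have null_image: "negligible (G ` ({a..b} \<inter> N))"
    using N by (intro abs_cont_mono_negligible_image[OF ac mono cont]) (auto intro: negligible_subset)
  have "{a..b} - N = {a..b} - ({a..b} \<inter> N)"
    by blast
  then have "G ` ({a..b} - N) = {G a..G b} - G ` ({a..b} \<inter> N)"
    using inj_on_image_set_diff[OF inj, of "{a..b}" "{a..b} \<inter> N"]
      mono_on_continuous_image_interval[OF cont mono \<open>a \<le> b\<close>] by auto
  then have null_diff: "negligible (sym_diff {G a..G b} (G ` ({a..b} - N)))"
    by (intro negligible_subset[OF null_image]) auto
  show "G ` ({a..b} - N) \<in> lmeasurable"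
    by (rule lmeasurable_negligible_symdiff[OF _ null_diff]) simp
  have "G a \<le> G b"
    using mono_onD[OF mono] \<open>a \<le> b\<close> by simp
  then show "measure lebesgue (G ` ({a..b} - N)) = G b - G a"
    using measure_negligible_symdiff[OF _ null_diff] by (simp add: measure_completion)
qed

text \<open>By the Luzin property of \<open>G\<close>, the change of variables formula applies on the set where the
  derivative exists.\<close>
lemma has_integral_abs_deriv_strict_mono:
  fixes G G' :: "real \<Rightarrow> real"
  assumes ac: "abs_cont_on_interval G a b" and cont: "continuous_on {a..b} G"
    and smono: "strict_mono_on {a..b} G" and "a \<le> b"
    and N: "negligible N" and deriv: "\<And>x. x \<in> {a..b} - N \<Longrightarrow> (G has_real_derivative G' x) (at x)"
  shows "((\<lambda>x. \<bar>G' x\<bar>) has_integral (G b - G a)) {a..b}"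
proof -
  define S where "S = {a..b} - N"
  have "(\<lambda>x. 1::real) absolutely_integrable_on G ` S \<and> integral (G ` S) (\<lambda>x. 1) = G b - G a"
    using measure_strict_mono_image_diff_negligible[OF ac cont smono \<open>a \<le> b\<close> N]
    by (simp add: S_def absolutely_integrable_on_const lmeasure_integral)
  moreover have "S \<in> sets lebesgue"
    unfolding S_def by (intro sets.Diff negligible_imp_sets[OF N]) auto
  moreover have "(G has_field_derivative G' x) (at x within S)" if "x \<in> S" for x
    using deriv that unfolding S_def by (blast intro: has_field_derivative_at_within)
  moreover have "inj_on G S"
    using strict_mono_on_imp_inj_on[OF smono] unfolding S_def by (rule inj_on_subset) blast
  ultimately have "(\<lambda>x. \<bar>G' x\<bar>) absolutely_integrable_on S \<and> integral S (\<lambda>x. \<bar>G' x\<bar>) = G b - G a"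
    using has_absolute_integral_change_of_variables_1'[of S G G' "\<lambda>_. 1" "G b - G a"] by simp
  then have "((\<lambda>x. \<bar>G' x\<bar>) has_integral (G b - G a)) S"
    using absolutely_integrable_on_def has_integral_integrable_integral by fastforce
  moreover have "negligible {x \<in> S - {a..b}. \<bar>G' x\<bar> \<noteq> 0}" "negligible {x \<in> {a..b} - S. \<bar>G' x\<bar> \<noteq> 0}"
    using N unfolding S_def by (auto intro: negligible_subset)
  ultimately show ?thesis
    by (subst (asm) has_integral_spike_set_eq) auto
qed

lemma null_set_avoids_interval:
  fixes N :: "real set"
  assumes "N \<in> null_sets lborel" "a < b"
  obtains x where "a < x" "x < b" "x \<notin> N"
proof -
  have "\<not> {a<..<b} \<subseteq> N"
  proof
    assume "{a<..<b} \<subseteq> N"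
    then have "emeasure lborel {a<..<b} \<le> emeasure lborel N"
      using assms(1) by (intro emeasure_mono) auto
    then show False
      using assms by (simp add: emeasure_lborel_Ioo null_setsD1)
  qed
  then obtain x where "x \<in> {a<..<b}" "x \<notin> N"
    by blast
  then show thesis
    by (intro that) auto
qed

lemma mono_on_compl_null_set_extend:
  fixes U :: "real \<Rightarrow> real"
  assumes N: "N \<in> null_sets lborel" and mono: "mono_on (- N) U"
  obtains V where "mono V" "\<And>x. x \<notin> N \<Longrightarrow> V x = U x"
proof -
  define A where "A x = U ` {y. y \<notin> N \<and> y \<le> x}" for x
  have A_ne: "A x \<noteq> {}" for x
  proof -
    obtain y where "y < x" "y \<notin> N"
      using null_set_avoids_interval[OF N, of "x - 1" x] by auto
    then show ?thesis
      unfolding A_def by auto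
  qed
  have A_bdd: "bdd_above (A x)" for x
  proof -
    obtain z where "x < z" "z \<notin> N"
      using null_set_avoids_interval[OF N, of x "x + 1"] by auto
    then have "\<forall>w\<in>A x. w \<le> U z"
      unfolding A_def by (auto intro: mono_onD[OF mono])
    then show ?thesis
      unfolding bdd_above_def by blast
  qed
  show thesis
  proof (rule that[of "\<lambda>x. Sup (A x)"])
    show "mono (\<lambda>x. Sup (A x))"
      by (rule monoI, rule cSup_subset_mono[OF A_ne A_bdd]) (auto simp: A_def)
    show "Sup (A x) = U x" if "x \<notin> N" for x
      unfolding A_def by (rule cSup_eq_maximum) (use that in \<open>auto intro!: mono_onD[OF mono]\<close>)
  qed
qed

lemma borel_measurable_antimono:
  fixes f :: "real \<Rightarrow> real"
  assumes "antimono f"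
  shows "f \<in> borel_measurable borel"
proof -
  have "(\<lambda>x. - f x) \<in> borel_measurable borel"
    using assms by (intro borel_measurable_mono) (auto simp: mono_def antimono_def)
  then show ?thesis
    by simp
qed

lemma antimono_tendsto_at_top_le:
  fixes \<psi> :: "real \<Rightarrow> real"
  assumes "antimono \<psi>" "(\<psi> \<longlongrightarrow> l) at_top"
  shows "l \<le> \<psi> t"
proof (rule tendsto_upperbound[OF assms(2)])
  show "\<forall>\<^sub>F s in at_top. \<psi> s \<le> \<psi> t"
    unfolding eventually_at_top_linorder by (intro exI[of _ t] allI impI antimonoD[OF assms(1)])
qed simp

lemma mono_tendsto_at_top_ge:
  fixes \<psi> :: "real \<Rightarrow> real"
  assumes "mono \<psi>" "(\<psi> \<longlongrightarrow> l) at_top"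
  shows "\<psi> t \<le> l"
proof (rule tendsto_lowerbound[OF assms(2)])
  show "\<forall>\<^sub>F s in at_top. \<psi> t \<le> \<psi> s"
    unfolding eventually_at_top_linorder by (intro exI[of _ t] allI impI monoD[OF assms(1)])
qed simp

lemma AE_lborel_reflect:
  fixes P :: "real \<Rightarrow> bool"
  assumes "AE x in lborel. P x"
  shows "AE x in lborel. P (- x)"
proof -
  have "AE x in distr lborel borel uminus. P x"
    unfolding lborel_distr_uminus by (rule assms)
  then show ?thesis
    by (rule AE_distrD[rotated]) simp
qed

lemma AE_lborel_translate:
  fixes P :: "real \<Rightarrow> bool"
  assumes "AE x in lborel. P x"
  shows "AE x in lborel. P (c + x)"
proof -
  have "AE x in distr lborel borel ((+) c). P x"
    unfolding lborel_distr_plus by (rule assms)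
  then show ?thesis
    by (rule AE_distrD[rotated]) simp
qed

lemma nn_integral_lborel_reflect:
  fixes F :: "real \<Rightarrow> ennreal"
  assumes "F \<in> borel_measurable borel"
  shows "(\<integral>\<^sup>+x. F (- x) \<partial>lborel) = (\<integral>\<^sup>+x. F x \<partial>lborel)"
  using nn_integral_real_affine[OF assms, of "-1" 0] by simp

lemma nn_integral_lborel_translate:
  fixes F :: "real \<Rightarrow> ennreal"
  assumes "F \<in> borel_measurable borel"
  shows "(\<integral>\<^sup>+x. F (x + c) \<partial>lborel) = (\<integral>\<^sup>+x. F x \<partial>lborel)"
  using nn_integral_real_affine[OF assms, of 1 c] by (simp add: add.commute)

lemma nn_integral_interval_reflect:
  fixes F :: "real \<Rightarrow> ennreal"
  assumes [measurable]: "F \<in> borel_measurable borel"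
  shows "(\<integral>\<^sup>+c\<in>{0..a}. F (s - c) \<partial>lborel) = (\<integral>\<^sup>+u\<in>{s - a..s}. F u \<partial>lborel)"
proof -
  have "(\<integral>\<^sup>+u\<in>{s - a..s}. F u \<partial>lborel) = (\<integral>\<^sup>+c. F (s - c) * indicator {s - a..s} (s - c) \<partial>lborel)"
    using nn_integral_real_affine[of "\<lambda>u. F u * indicator {s - a..s} u" "-1" s] by simp
  also have "\<dots> = (\<integral>\<^sup>+c\<in>{0..a}. F (s - c) \<partial>lborel)"
    by (auto intro!: nn_integral_cong split: split_indicator)
  finally show ?thesis ..
qed

lemma pred_in_atLeastAtMost [measurable (raw)]:
  fixes f g h :: "'a \<Rightarrow> real"
  assumes [measurable]: "f \<in> borel_measurable M" "g \<in> borel_measurable M" "h \<in> borel_measurable M"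
  shows "Measurable.pred M (\<lambda>x. f x \<in> {g x..h x})"
  unfolding atLeastAtMost_iff by measurable

lemma nn_integral_lborel_pair:
  fixes h :: "real \<times> real \<Rightarrow> ennreal"
  assumes "h \<in> borel_measurable (borel \<Otimes>\<^sub>M borel)"
  shows "(\<integral>\<^sup>+z. h z \<partial>lborel) = (\<integral>\<^sup>+x. \<integral>\<^sup>+y. h (x, y) \<partial>lborel \<partial>lborel)"
proof -
  have "(\<integral>\<^sup>+x. \<integral>\<^sup>+y. h (x, y) \<partial>lborel \<partial>lborel) = integral\<^sup>N (lborel \<Otimes>\<^sub>M lborel) h"
    by (rule lborel.nn_integral_fst)
       (use assms measurable_cong_sets[OF sets_pair_measure_cong[OF sets_lborel sets_lborel] refl] in simp)
  then show ?thesis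
    by (simp add: lborel_prod)
qed

lemma nn_integral_lborel_shear:
  fixes h :: "real \<Rightarrow> real \<Rightarrow> ennreal"
  assumes [measurable]: "(\<lambda>(x1, x2). h x1 x2) \<in> borel_measurable (borel \<Otimes>\<^sub>M borel)"
  shows "(\<integral>\<^sup>+x1. \<integral>\<^sup>+x2. h x1 x2 \<partial>lborel \<partial>lborel) = (\<integral>\<^sup>+s. \<integral>\<^sup>+y. h (s + a) (s + y + b) \<partial>lborel \<partial>lborel)"
proof -
  have "(\<integral>\<^sup>+x1. \<integral>\<^sup>+x2. h x1 x2 \<partial>lborel \<partial>lborel) = (\<integral>\<^sup>+s. \<integral>\<^sup>+x2. h (s + a) x2 \<partial>lborel \<partial>lborel)"
    by (rule nn_integral_lborel_translate[where F = "\<lambda>x1. \<integral>\<^sup>+x2. h x1 x2 \<partial>lborel", symmetric]) measurable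
  also have "\<dots> = (\<integral>\<^sup>+s. \<integral>\<^sup>+y. h (s + a) (s + y + b) \<partial>lborel \<partial>lborel)"
  proof (rule nn_integral_cong)
    fix s
    show "(\<integral>\<^sup>+x2. h (s + a) x2 \<partial>lborel) = (\<integral>\<^sup>+y. h (s + a) (s + y + b) \<partial>lborel)"
      using nn_integral_lborel_translate[where F = "h (s + a)" and c = "s + b"]
      by (simp add: add.assoc add.left_commute)
  qed
  finally show ?thesis .
qed

lemma nn_integral_lborel_rotate:
  fixes H :: "real \<Rightarrow> real \<Rightarrow> real \<Rightarrow> ennreal"
  assumes "\<And>s. (\<lambda>(y, c). H s y c) \<in> borel_measurable (lborel \<Otimes>\<^sub>M lborel)"
    and "(\<lambda>(s, c). \<integral>\<^sup>+y. H s y c \<partial>lborel) \<in> borel_measurable (lborel \<Otimes>\<^sub>M lborel)"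
  shows "(\<integral>\<^sup>+s. \<integral>\<^sup>+y. \<integral>\<^sup>+c. H s y c \<partial>lborel \<partial>lborel \<partial>lborel)
    = (\<integral>\<^sup>+c. \<integral>\<^sup>+s. \<integral>\<^sup>+y. H s y c \<partial>lborel \<partial>lborel \<partial>lborel)"
proof -
  have "(\<integral>\<^sup>+s. \<integral>\<^sup>+y. \<integral>\<^sup>+c. H s y c \<partial>lborel \<partial>lborel \<partial>lborel)
      = (\<integral>\<^sup>+s. \<integral>\<^sup>+c. \<integral>\<^sup>+y. H s y c \<partial>lborel \<partial>lborel \<partial>lborel)"
    using lborel_pair.Fubini'[OF assms(1)] by simp
  also have "\<dots> = (\<integral>\<^sup>+c. \<integral>\<^sup>+s. \<integral>\<^sup>+y. H s y c \<partial>lborel \<partial>lborel \<partial>lborel)"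
    using lborel_pair.Fubini'[OF assms(2)] by simp
  finally show ?thesis .
qed

lemma nn_integral_lborel_iterated_add:
  fixes F G :: "real \<Rightarrow> real \<Rightarrow> ennreal"
  assumes "(\<lambda>(s, y). F s y) \<in> borel_measurable (borel \<Otimes>\<^sub>M borel)"
    and "(\<lambda>(s, y). G s y) \<in> borel_measurable (borel \<Otimes>\<^sub>M borel)"
  shows "(\<integral>\<^sup>+s. \<integral>\<^sup>+y. F s y + G s y \<partial>lborel \<partial>lborel)
    = (\<integral>\<^sup>+s. \<integral>\<^sup>+y. F s y \<partial>lborel \<partial>lborel) + (\<integral>\<^sup>+s. \<integral>\<^sup>+y. G s y \<partial>lborel \<partial>lborel)"
  using assms by (subst nn_integral_add[symmetric]; measurable; intro nn_integral_cong nn_integral_add; measurable)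

lemma down_closed_cofinal_incseq:
  fixes S :: "real set"
  assumes down: "\<And>y y'. y \<in> S \<Longrightarrow> y' \<le> y \<Longrightarrow> y' \<in> S" and "S \<noteq> {}"
  obtains t where "incseq t" "\<And>n. t n \<in> S" "\<And>y. y \<in> S \<Longrightarrow> \<exists>n. y \<le> t n"
proof (cases "bdd_above S")
  case False
  have "real n \<in> S" for n
    using False down unfolding bdd_above_def by (meson linear)
  moreover have "\<exists>n. y \<le> real n" for y
    using real_arch_simple by blast
  ultimately show thesis
    by (intro that[of real]) (auto simp: incseq_def)
next
  case True
  show thesis
  proof (cases "Sup S \<in> S")
    case True
    then show thesis
      using \<open>bdd_above S\<close> by (intro that[of "\<lambda>_. Sup S"]) (auto intro: cSup_upper)
  next
    case False
    define t where "t n = Sup S - 1 / (real n + 1)" for n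
    have "t n \<in> S" for n
    proof -
      obtain z where "z \<in> S" "t n < z"
        using less_cSup_iff[OF \<open>S \<noteq> {}\<close> \<open>bdd_above S\<close>, of "t n"] by (auto simp: t_def)
      then show ?thesis
        using down by auto
    qed
    moreover have "\<exists>n. y \<le> t n" if "y \<in> S" for y
    proof -
      have "y < Sup S"
        using that False cSup_upper[OF that \<open>bdd_above S\<close>] by (auto simp: order.order_iff_strict)
      then obtain n where "1 / (real n + 1) < Sup S - y"
        using nat_approx_posE[of "Sup S - y"] by (metis diff_gt_0_iff_gt of_nat_Suc add.commute)
      then show ?thesis
        by (intro exI[of _ n]) (simp add: t_def)
    qed
    moreover have "incseq t"
      unfolding t_def incseq_def by (auto intro!: divide_left_mono)
    ultimately show thesis
      using that by blast
  qed
qed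

lemma nn_integral_down_closed_le:
  fixes S :: "real set" and h1 h2 :: "real \<Rightarrow> real \<Rightarrow> ennreal"
  assumes down: "\<And>y y'. y \<in> S \<Longrightarrow> y' \<le> y \<Longrightarrow> y' \<in> S"
    and [measurable]: "(\<lambda>(s, y). h1 s y) \<in> borel_measurable (borel \<Otimes>\<^sub>M borel)"
    and le: "\<And>t. t \<in> S \<Longrightarrow>
      (\<integral>\<^sup>+s. (\<integral>\<^sup>+y\<in>{..t}. h1 s y \<partial>lborel) \<partial>lborel) \<le> (\<integral>\<^sup>+s. (\<integral>\<^sup>+y\<in>{..t}. h2 s y \<partial>lborel) \<partial>lborel)"
  shows "(\<integral>\<^sup>+s. (\<integral>\<^sup>+y\<in>S. h1 s y \<partial>lborel) \<partial>lborel) \<le> (\<integral>\<^sup>+s. (\<integral>\<^sup>+y\<in>S. h2 s y \<partial>lborel) \<partial>lborel)"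
proof (cases "S = {}")
  case False
  then obtain t where t: "incseq t" "\<And>n. t n \<in> S" "\<And>y. y \<in> S \<Longrightarrow> \<exists>n. y \<le> t n"
    using down_closed_cofinal_incseq[of S] down by metis
  define H where "H n s = (\<integral>\<^sup>+y\<in>{..t n}. h1 s y \<partial>lborel)" for n s
  have H_mono: "h1 s y * indicator {..t n} y \<le> h1 s y * indicator {..t m} y" if "n \<le> m" for s y n m
    using monoD[OF t(1) that] by (auto split: split_indicator)
  have "h1 s y * indicator S y = (SUP n. h1 s y * indicator {..t n} y)" for s y
  proof (cases "y \<in> S")
    case True
    then obtain n where "y \<le> t n"
      using t(3) by blast
    then show ?thesis
      using True t(2) down by (intro antisym SUP_upper2[of n] SUP_least) (auto split: split_indicator)
  next
    case False
    then have "\<not> y \<le> t n" for n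
      using t(2) down by blast
    with False show ?thesis
      by simp
  qed
  then have "(\<integral>\<^sup>+y\<in>S. h1 s y \<partial>lborel) = (SUP n. H n s)" for s
    unfolding H_def using H_mono by (simp, intro nn_integral_monotone_convergence_SUP) (auto simp: incseq_def le_fun_def)
  then have "(\<integral>\<^sup>+s. (\<integral>\<^sup>+y\<in>S. h1 s y \<partial>lborel) \<partial>lborel) = (SUP n. \<integral>\<^sup>+s. H n s \<partial>lborel)"
    unfolding H_def using H_mono
    by (simp, intro nn_integral_monotone_convergence_SUP) (auto simp: incseq_def le_fun_def intro!: nn_integral_mono)
  also have "\<dots> \<le> (\<integral>\<^sup>+s. (\<integral>\<^sup>+y\<in>S. h2 s y \<partial>lborel) \<partial>lborel)"
  proof (rule SUP_least)
    fix n
    have "(\<integral>\<^sup>+s. (\<integral>\<^sup>+y\<in>{..t n}. h2 s y \<partial>lborel) \<partial>lborel) \<le> (\<integral>\<^sup>+s. (\<integral>\<^sup>+y\<in>S. h2 s y \<partial>lborel) \<partial>lborel)"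
      using t(2) down by (intro nn_integral_mono mult_left_mono) (auto split: split_indicator)
    then show "(\<integral>\<^sup>+s. H n s \<partial>lborel) \<le> (\<integral>\<^sup>+s. (\<integral>\<^sup>+y\<in>S. h2 s y \<partial>lborel) \<partial>lborel)"
      unfolding H_def using le[OF t(2)] by (rule order_trans[rotated])
  qed
  finally show ?thesis .
qed simp

section \<open>Bowl-shaped losses\<close>

text \<open>\<open>V\<close> plays the role of \<open>W'\<close>, chosen increasing everywhere: the hypothesis only makes
  \<open>W'\<close> increasing off a null set, and \<open>bowl_loss_ae_mono_deriv\<close> replaces it by such a version.\<close>
locale bowl_loss =
  fixes W V :: "real \<Rightarrow> real"
  assumes abs_cont: "abs_cont W"
    and zero: "W 0 = 0"
    and nonneg: "\<And>t. 0 \<le> W t"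
    and strict_dec: "\<And>s t. s < t \<Longrightarrow> t < 0 \<Longrightarrow> W t < W s"
    and strict_inc: "\<And>s t. 0 < s \<Longrightarrow> s < t \<Longrightarrow> W s < W t"
    and mono_deriv: "mono V"
    and has_deriv: "AE x in lborel. (W has_real_derivative V x) (at x)"
begin

lemma continuous: "continuous_on A W"
  using abs_cont_imp_isCont[OF abs_cont] by (intro continuous_at_imp_continuous_on) blast

lemma borel_measurable [measurable]: "W \<in> borel_measurable borel"
  using continuous by (rule borel_measurable_continuous_onI)

lemma deriv_borel_measurable [measurable]: "V \<in> borel_measurable borel"
  using mono_deriv by (rule borel_measurable_mono)

lemma strict_mono_on_nonneg: "strict_mono_on {0..} W"
proof (rule strict_mono_onI)
  fix s t :: real
  assume "s \<in> {0..}" "s < t"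
  then show "W s < W t"
    using strict_inc[of s t] strict_inc[of "t / 2" t] nonneg[of "t / 2"] zero
    by (cases "s = 0") auto
qed

lemma strict_mono_on_nonpos: "strict_mono_on {..0} (\<lambda>x. - W x)"
proof (rule strict_mono_onI)
  fix s t :: real
  assume "t \<in> {..0}" "s < t"
  then show "- W s < - W t"
    using strict_dec[of s t] strict_dec[of s "s / 2"] nonneg[of "s / 2"] zero
    by (cases "t = 0") auto
qed

lemma deriv_off_null_set:
  obtains N where "N \<in> null_sets lborel" "\<And>x. x \<notin> N \<Longrightarrow> (W has_real_derivative V x) (at x)"
proof -
  obtain N where "{x. \<not> (W has_real_derivative V x) (at x)} \<subseteq> N" "N \<in> null_sets lborel"
    using has_deriv by (auto elim!: AE_E simp: null_sets_def)
  then show thesis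
    using that by blast
qed

lemma deriv_exists_between:
  assumes "a < b"
  obtains y where "a < y" "y < b" "(W has_real_derivative V y) (at y)"
  using deriv_off_null_set null_set_avoids_interval[OF _ assms] by metis

lemma deriv_nonneg:
  assumes "0 < x"
  shows "0 \<le> V x"
proof -
  obtain y where y: "0 < y" "y < x" "(W has_real_derivative V y) (at y)"
    using deriv_exists_between[OF assms] .
  have "0 \<le> V y"
    using mono_on_imp_deriv_nonneg[OF strict_mono_on_imp_mono_on[OF strict_mono_on_nonneg] y(3)] y
    by simp
  then show ?thesis
    using monoD[OF mono_deriv, of y x] y by simp
qed

lemma deriv_nonpos:
  assumes "x < 0"
  shows "V x \<le> 0"
proof -
  obtain y where y: "x < y" "y < 0" "(W has_real_derivative V y) (at y)"
    using deriv_exists_between[OF assms] .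
  have "0 \<le> - V y"
    using mono_on_imp_deriv_nonneg[OF strict_mono_on_imp_mono_on[OF strict_mono_on_nonpos] DERIV_minus[OF y(3)]] y
    by simp
  then show ?thesis
    using monoD[OF mono_deriv, of x y] y by simp
qed

lemma has_integral_abs_deriv_nonneg:
  assumes "0 \<le> p" "p \<le> q"
  shows "((\<lambda>x. \<bar>V x\<bar>) has_integral (W q - W p)) {p..q}"
proof -
  obtain N where N: "N \<in> null_sets lborel" "\<And>x. x \<notin> N \<Longrightarrow> (W has_real_derivative V x) (at x)"
    using deriv_off_null_set by blast
  show ?thesis
  proof (rule has_integral_abs_deriv_strict_mono[OF _ continuous _ \<open>p \<le> q\<close>])
    show "abs_cont_on_interval W p q"
      using abs_cont \<open>p \<le> q\<close> by (simp add: abs_cont_def)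
    show "strict_mono_on {p..q} W"
      using strict_mono_on_nonneg by (rule monotone_on_subset) (use assms in auto)
    show "negligible N"
      using N(1) negligible_iff_null_sets null_sets_completionI by blast
  qed (use N(2) in auto)
qed

lemma nn_integral_deriv:
  assumes "x \<le> y"
  shows "(\<integral>\<^sup>+u\<in>{x..y}. ennreal (V u) \<partial>lborel) = ennreal (W (max y 0) - W (max x 0))"
proof -
  have "(\<integral>\<^sup>+u\<in>{x..y}. ennreal (V u) \<partial>lborel) = (\<integral>\<^sup>+u\<in>{max x 0..max y 0}. ennreal \<bar>V u\<bar> \<partial>lborel)"
    using AE_lborel_singleton[of 0]
  proof (rule nn_integral_cong_AE[OF AE_mp], intro AE_I2 impI)
    fix u :: real
    assume "u \<noteq> 0"
    then show "ennreal (V u) * indicator {x..y} u = ennreal \<bar>V u\<bar> * indicator {max x 0..max y 0} u"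
      using deriv_nonneg[of u] deriv_nonpos[of u] by (auto simp: ennreal_neg split: split_indicator)
  qed
  also have "\<dots> = ennreal (W (max y 0) - W (max x 0))"
    using assms by (intro nn_integral_has_integral_lebesgue' has_integral_abs_deriv_nonneg) auto
  finally show ?thesis .
qed

end

lemma bowl_loss_reflect:
  assumes "bowl_loss W V"
  shows "bowl_loss (\<lambda>x. W (- x)) (\<lambda>x. - V (- x))"
proof -
  interpret bowl_loss W V
    by (fact assms)
  show ?thesis
  proof
    show "abs_cont (\<lambda>x. W (- x))"
      using abs_cont by (rule abs_cont_reflect)
    show "mono (\<lambda>x. - V (- x))"
      using mono_deriv by (auto simp: mono_def)
    show "AE x in lborel. ((\<lambda>x. W (- x)) has_real_derivative - V (- x)) (at x)"
      using AE_lborel_reflect[OF has_deriv] by (simp add: DERIV_mirror)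
  qed (use zero nonneg strict_dec strict_inc in auto)
qed

lemma bowl_loss_ae_mono_deriv:
  assumes "abs_cont W" "W 0 = 0" "\<And>t. 0 \<le> W t"
    and "\<And>s t. s < t \<Longrightarrow> t < 0 \<Longrightarrow> W t < W s" "\<And>s t. 0 < s \<Longrightarrow> s < t \<Longrightarrow> W s < W t"
    and deriv: "AE t in lborel. (W has_real_derivative W' t) (at t)"
    and mono_ae: "\<exists>N \<in> null_sets lborel. mono_on (- N) W'"
  obtains V where "bowl_loss W V" "AE x in lborel. V x = W' x"
proof -
  obtain N where N: "N \<in> null_sets lborel" "mono_on (- N) W'"
    using mono_ae by blast
  obtain V where "mono V" and V_eq: "\<And>x. x \<notin> N \<Longrightarrow> V x = W' x"
    using mono_on_compl_null_set_extend[OF N] by blast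
  have V_ae: "AE x in lborel. V x = W' x"
    using AE_not_in[OF N(1)] by eventually_elim (rule V_eq)
  have bowl: "bowl_loss W V"
  proof
    show "AE x in lborel. (W has_real_derivative V x) (at x)"
      using deriv V_ae by eventually_elim simp
  qed (use assms \<open>mono V\<close> in auto)
  show thesis
    by (rule that[OF bowl V_ae])
qed

context bowl_loss
begin

lemma nn_integral_neg_deriv:
  assumes "x \<le> y"
  shows "(\<integral>\<^sup>+u\<in>{x..y}. ennreal (- V u) \<partial>lborel) = ennreal (W (min x 0) - W (min y 0))"
proof -
  interpret reflected: bowl_loss "\<lambda>x. W (- x)" "\<lambda>x. - V (- x)"
    using bowl_loss_reflect[OF bowl_loss_axioms] .
  have "(\<integral>\<^sup>+u\<in>{x..y}. ennreal (- V u) \<partial>lborel) = (\<integral>\<^sup>+u\<in>{- y..- x}. ennreal (- V (- u)) \<partial>lborel)"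
    by (subst nn_integral_lborel_reflect[symmetric]) (auto intro!: nn_integral_cong split: split_indicator)
  also have "\<dots> = ennreal (W (min x 0) - W (min y 0))"
    using reflected.nn_integral_deriv[of "- y" "- x"] assms by (simp add: max_def min_def)
  finally show ?thesis .
qed

lemma W_max_0_mono: "x \<le> y \<Longrightarrow> W (max x 0) \<le> W (max y 0)"
  using strict_mono_on_imp_mono_on[OF strict_mono_on_nonneg] by (rule mono_onD) auto

lemma W_min_0_antimono:
  assumes "x \<le> y"
  shows "W (min y 0) \<le> W (min x 0)"
proof -
  have "- W (min x 0) \<le> - W (min y 0)"
    using assms by (intro mono_onD[OF strict_mono_on_imp_mono_on[OF strict_mono_on_nonpos]]) auto
  then show ?thesis
    by simp
qed

lemma nn_integral_deriv_fundamental: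
  assumes "x \<le> y"
  shows "ennreal (W x) + (\<integral>\<^sup>+u\<in>{x..y}. ennreal (V u) \<partial>lborel)
    = ennreal (W y) + (\<integral>\<^sup>+u\<in>{x..y}. ennreal (- V u) \<partial>lborel)"
proof -
  have "W x + (W (max y 0) - W (max x 0)) = W y + (W (min x 0) - W (min y 0))"
    using zero by (simp add: max_def min_def)
  then show ?thesis
    using W_max_0_mono[OF assms] W_min_0_antimono[OF assms] nonneg[of x] nonneg[of y]
    by (simp add: nn_integral_deriv nn_integral_neg_deriv assms ennreal_plus[symmetric] del: ennreal_plus)
qed

lemma nn_integral_deriv_le:
  assumes "x \<le> y"
  shows "(\<integral>\<^sup>+u\<in>{x..y}. ennreal (V u) \<partial>lborel) \<le> ennreal (W y)"
proof -
  have "W (max y 0) - W (max x 0) \<le> W y"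
    using assms nonneg[of "max x 0"] nonneg[of x] zero nonneg[of y] by (simp add: max_def)
  then show ?thesis
    by (simp add: nn_integral_deriv assms ennreal_leI)
qed

end

section \<open>Risk of the estimators\<close>

text \<open>With \<open>s = X\<^sub>1 - \<theta>\<^sub>1\<close>, \<open>y = (X\<^sub>2 - \<theta>\<^sub>2) - (X\<^sub>1 - \<theta>\<^sub>1)\<close>, \<open>g\<close> the density of \<open>(s, y)\<close> and
  \<open>\<eta> = \<theta>\<^sub>2 - \<theta>\<^sub>1\<close>, so that \<open>D = \<eta> + y\<close>, this is the risk \<open>E W(X\<^sub>1 - \<phi>(D) - \<theta>\<^sub>1)\<close> of the
  first coordinate of \<open>(X\<^sub>1 - \<phi>(D), X\<^sub>2 + \<phi>(D))\<close>.\<close>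
definition coordinate_risk ::
    "(real \<times> real \<Rightarrow> real) \<Rightarrow> (real \<Rightarrow> real) \<Rightarrow> (real \<Rightarrow> real) \<Rightarrow> real \<Rightarrow> ennreal" where
  "coordinate_risk g W \<phi> \<eta> =
     (\<integral>\<^sup>+s. \<integral>\<^sup>+y. ennreal (W (s - \<phi> (\<eta> + y))) * ennreal (g (s, y)) \<partial>lborel \<partial>lborel)"

text \<open>For \<open>U = W'\<close> and \<open>g (s, y) = f (s, s + y)\<close> this is the double integral of the
  hypotheses (a) and (b); as \<open>ennreal\<close> truncates negative values, \<open>tail_integral g U\<close> and
  \<open>tail_integral g (\<lambda>x. - U x)\<close> are its positive and negative parts.\<close>
definition tail_integral ::
    "(real \<times> real \<Rightarrow> real) \<Rightarrow> (real \<Rightarrow> real) \<Rightarrow> (real \<Rightarrow> real) \<Rightarrow> real \<Rightarrow> ennreal" where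
  "tail_integral g U \<psi> t =
     (\<integral>\<^sup>+s. ennreal (U (s - \<psi> t)) * (\<integral>\<^sup>+y\<in>{..t}. ennreal (g (s, y)) \<partial>lborel) \<partial>lborel)"

text \<open>With \<open>U = V\<close> and \<open>U = - V\<close> these are the positive and negative parts of
  \<open>W s - W (s - \<psi> (\<eta> + y))\<close>, the integral of \<open>W' (s - c)\<close> over \<open>0 \<le> c \<le> \<psi> (\<eta> + y)\<close>,
  integrated against \<open>g\<close>.\<close>
definition increment_integral ::
    "(real \<times> real \<Rightarrow> real) \<Rightarrow> (real \<Rightarrow> real) \<Rightarrow> (real \<Rightarrow> real) \<Rightarrow> real \<Rightarrow> ennreal" where
  "increment_integral g U \<psi> \<eta> =
     (\<integral>\<^sup>+s. \<integral>\<^sup>+y. (\<integral>\<^sup>+c\<in>{0..\<psi> (\<eta> + y)}. ennreal (U (s - c)) \<partial>lborel) * ennreal (g (s, y)) \<partial>lborel \<partial>lborel)"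

lemma tail_integral_eq:
  assumes [measurable]: "g \<in> borel_measurable (borel \<Otimes>\<^sub>M borel)"
  shows "tail_integral g U \<psi> t =
    (\<integral>\<^sup>+s. (\<integral>\<^sup>+y\<in>{..t}. ennreal (U (s - \<psi> t)) * ennreal (g (s, y)) \<partial>lborel) \<partial>lborel)"
  unfolding tail_integral_def
  by (intro nn_integral_cong) (simp add: nn_integral_cmult[symmetric] mult.assoc)

lemma increment_integral_rotate:
  assumes [measurable]: "U \<in> borel_measurable borel" "g \<in> borel_measurable (borel \<Otimes>\<^sub>M borel)"
    "\<psi> \<in> borel_measurable borel"
  shows "increment_integral g U \<psi> \<eta> = (\<integral>\<^sup>+c. \<integral>\<^sup>+s. \<integral>\<^sup>+y.
    ennreal (U (s - c)) * indicator {0..\<psi> (\<eta> + y)} c * ennreal (g (s, y)) \<partial>lborel \<partial>lborel \<partial>lborel)"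
proof -
  have "increment_integral g U \<psi> \<eta> = (\<integral>\<^sup>+s. \<integral>\<^sup>+y. \<integral>\<^sup>+c.
      ennreal (U (s - c)) * indicator {0..\<psi> (\<eta> + y)} c * ennreal (g (s, y)) \<partial>lborel \<partial>lborel \<partial>lborel)"
    unfolding increment_integral_def
    by (intro nn_integral_cong nn_integral_multc[symmetric]) measurable
  also have "\<dots> = (\<integral>\<^sup>+c. \<integral>\<^sup>+s. \<integral>\<^sup>+y.
      ennreal (U (s - c)) * indicator {0..\<psi> (\<eta> + y)} c * ennreal (g (s, y)) \<partial>lborel \<partial>lborel \<partial>lborel)"
    by (rule nn_integral_lborel_rotate) measurable
  finally show ?thesis .
qed

text \<open>Substituting \<open>x\<^sub>1 = s + \<theta>\<^sub>1\<close> and \<open>x\<^sub>2 = s + y + \<theta>\<^sub>2\<close> splits the risk into the two coordinates.\<close>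
lemma risk_eq_coordinates:
  fixes f :: "real \<times> real \<Rightarrow> real" and W \<phi> :: "real \<Rightarrow> real" and \<theta> :: "real \<times> real"
  assumes [measurable]: "f \<in> borel_measurable (borel \<Otimes>\<^sub>M borel)" "W \<in> borel_measurable borel"
    "\<phi> \<in> borel_measurable borel"
    and W_nonneg: "\<And>t. 0 \<le> W t"
  defines "g \<equiv> \<lambda>z. f (fst z, fst z + snd z)" and "\<eta> \<equiv> snd \<theta> - fst \<theta>"
  shows "risk f W \<theta> (\<lambda>x. (fst x - \<phi> (snd x - fst x), snd x + \<phi> (snd x - fst x)))
    = coordinate_risk g W \<phi> \<eta>
      + (\<integral>\<^sup>+s. \<integral>\<^sup>+y. ennreal (W (s + y + \<phi> (\<eta> + y))) * ennreal (g (s, y)) \<partial>lborel \<partial>lborel)"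
proof -
  obtain t1 t2 where \<theta>: "\<theta> = (t1, t2)"
    by fastforce
  define h where "h x1 x2 = ennreal (W (x1 - \<phi> (x2 - x1) - t1) + W (x2 + \<phi> (x2 - x1) - t2))
    * ennreal (f (x1 - t1, x2 - t2))" for x1 x2
  have h_meas: "(\<lambda>z. h (fst z) (snd z)) \<in> borel_measurable (borel \<Otimes>\<^sub>M borel)"
    unfolding h_def by measurable
  have "risk f W \<theta> (\<lambda>x. (fst x - \<phi> (snd x - fst x), snd x + \<phi> (snd x - fst x)))
      = (\<integral>\<^sup>+x. h (fst x) (snd x) \<partial>lborel)"
    unfolding risk_def loss_def h_def \<theta> by simp
  also have "\<dots> = (\<integral>\<^sup>+x1. \<integral>\<^sup>+x2. h x1 x2 \<partial>lborel \<partial>lborel)"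
    using nn_integral_lborel_pair[OF h_meas] by simp
  also have "\<dots> = (\<integral>\<^sup>+s. \<integral>\<^sup>+y. h (s + t1) (s + y + t2) \<partial>lborel \<partial>lborel)"
    using h_meas by (intro nn_integral_lborel_shear) (simp add: case_prod_beta')
  also have "\<dots> = (\<integral>\<^sup>+s. \<integral>\<^sup>+y. ennreal (W (s - \<phi> (\<eta> + y))) * ennreal (g (s, y))
      + ennreal (W (s + y + \<phi> (\<eta> + y))) * ennreal (g (s, y)) \<partial>lborel \<partial>lborel)"
    using W_nonneg by (simp add: h_def g_def \<eta>_def \<theta> ennreal_plus distrib_right algebra_simps)
  also have "\<dots> = coordinate_risk g W \<phi> \<eta>
      + (\<integral>\<^sup>+s. \<integral>\<^sup>+y. ennreal (W (s + y + \<phi> (\<eta> + y))) * ennreal (g (s, y)) \<partial>lborel \<partial>lborel)"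
    unfolding coordinate_risk_def g_def by (rule nn_integral_lborel_iterated_add) measurable
  finally show ?thesis .
qed

text \<open>The substitution \<open>s \<mapsto> - y - s\<close> and the symmetries of \<open>f\<close> and \<open>W\<close> show that both
  coordinates contribute equally.\<close>
lemma second_coordinate_risk_eq:
  fixes f :: "real \<times> real \<Rightarrow> real" and W \<phi> :: "real \<Rightarrow> real"
  assumes [measurable]: "f \<in> borel_measurable (borel \<Otimes>\<^sub>M borel)" "W \<in> borel_measurable borel"
    "\<phi> \<in> borel_measurable borel"
    and f_swap: "\<And>z1 z2. f (z1, z2) = f (z2, z1)" and f_neg: "\<And>z1 z2. f (z1, z2) = f (- z1, - z2)"
    and W_even: "\<And>t. W t = W (- t)"
  defines "g \<equiv> \<lambda>z. f (fst z, fst z + snd z)"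
  shows "(\<integral>\<^sup>+s. \<integral>\<^sup>+y. ennreal (W (s + y + \<phi> (\<eta> + y))) * ennreal (g (s, y)) \<partial>lborel \<partial>lborel)
    = coordinate_risk g W \<phi> \<eta>"
proof -
  have "(\<integral>\<^sup>+s. \<integral>\<^sup>+y. ennreal (W (s + y + \<phi> (\<eta> + y))) * ennreal (g (s, y)) \<partial>lborel \<partial>lborel)
      = (\<integral>\<^sup>+y. \<integral>\<^sup>+s. ennreal (W (s + y + \<phi> (\<eta> + y))) * ennreal (g (s, y)) \<partial>lborel \<partial>lborel)"
    unfolding g_def by (rule lborel_pair.Fubini'[symmetric]) measurable
  also have "\<dots> = (\<integral>\<^sup>+y. \<integral>\<^sup>+s. ennreal (W (- (s + y) + y + \<phi> (\<eta> + y))) * ennreal (g (- (s + y), y))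
      \<partial>lborel \<partial>lborel)"
  proof (rule nn_integral_cong)
    fix y :: real
    define A where "A s = ennreal (W (s + y + \<phi> (\<eta> + y))) * ennreal (g (s, y))" for s
    have [measurable]: "A \<in> borel_measurable borel"
      unfolding A_def g_def prod.sel by measurable
    have "(\<integral>\<^sup>+s. A s \<partial>lborel) = (\<integral>\<^sup>+s. A (- s) \<partial>lborel)"
      by (rule nn_integral_lborel_reflect[symmetric]) measurable
    also have "\<dots> = (\<integral>\<^sup>+s. A (- (s + y)) \<partial>lborel)"
      by (rule nn_integral_lborel_translate[where F = "\<lambda>s. A (- s)", symmetric]) measurable
    finally show "(\<integral>\<^sup>+s. ennreal (W (s + y + \<phi> (\<eta> + y))) * ennreal (g (s, y)) \<partial>lborel)
        = (\<integral>\<^sup>+s. ennreal (W (- (s + y) + y + \<phi> (\<eta> + y))) * ennreal (g (- (s + y), y)) \<partial>lborel)"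
      unfolding A_def .
  qed
  also have "\<dots> = (\<integral>\<^sup>+y. \<integral>\<^sup>+s. ennreal (W (s - \<phi> (\<eta> + y))) * ennreal (g (s, y)) \<partial>lborel \<partial>lborel)"
  proof (intro nn_integral_cong)
    fix y s
    have "W (- (s + y) + y + \<phi> (\<eta> + y)) = W (s - \<phi> (\<eta> + y))"
      using W_even[of "s - \<phi> (\<eta> + y)"] by simp
    moreover have "g (- (s + y), y) = g (s, y)"
      using f_neg[of "- (s + y)" "- s"] f_swap[of "s + y" s] by (simp add: g_def add.commute)
    ultimately show "ennreal (W (- (s + y) + y + \<phi> (\<eta> + y))) * ennreal (g (- (s + y), y))
        = ennreal (W (s - \<phi> (\<eta> + y))) * ennreal (g (s, y))"
      by simp
  qed
  also have "\<dots> = coordinate_risk g W \<phi> \<eta>"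
    unfolding coordinate_risk_def g_def by (rule lborel_pair.Fubini') measurable
  finally show ?thesis .
qed

lemma risk_eq_coordinate_risk:
  fixes f :: "real \<times> real \<Rightarrow> real" and W \<phi> :: "real \<Rightarrow> real" and \<theta> :: "real \<times> real"
  assumes "f \<in> borel_measurable (borel \<Otimes>\<^sub>M borel)" "W \<in> borel_measurable borel" "\<phi> \<in> borel_measurable borel"
    and "\<And>z1 z2. f (z1, z2) = f (z2, z1)" "\<And>z1 z2. f (z1, z2) = f (- z1, - z2)"
    and "\<And>t. 0 \<le> W t" "\<And>t. W t = W (- t)"
  shows "risk f W \<theta> (\<lambda>x. (fst x - \<phi> (snd x - fst x), snd x + \<phi> (snd x - fst x)))
    = 2 * coordinate_risk (\<lambda>z. f (fst z, fst z + snd z)) W \<phi> (snd \<theta> - fst \<theta>)"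
  using risk_eq_coordinates[OF assms(1-3,6)] second_coordinate_risk_eq[OF assms(1-5,7)]
  by (simp add: mult_2)

lemma coordinate_risk_reflect:
  assumes [measurable]: "g \<in> borel_measurable (borel \<Otimes>\<^sub>M borel)" "W \<in> borel_measurable borel"
    "\<phi> \<in> borel_measurable borel"
    and W_even: "\<And>t. W (- t) = W t"
  shows "coordinate_risk (\<lambda>z. g (- fst z, snd z)) W (\<lambda>t. - \<phi> t) \<eta> = coordinate_risk g W \<phi> \<eta>"
proof -
  define F where "F s = (\<integral>\<^sup>+y. ennreal (W (- (s - \<phi> (\<eta> + y)))) * ennreal (g (s, y)) \<partial>lborel)" for s
  have [measurable]: "F \<in> borel_measurable borel"
    unfolding F_def by measurable
  have "coordinate_risk (\<lambda>z. g (- fst z, snd z)) W (\<lambda>t. - \<phi> t) \<eta> = (\<integral>\<^sup>+s. F (- s) \<partial>lborel)"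
    unfolding coordinate_risk_def F_def by (simp add: algebra_simps)
  also have "\<dots> = (\<integral>\<^sup>+s. F s \<partial>lborel)"
    by (rule nn_integral_lborel_reflect) measurable
  also have "\<dots> = coordinate_risk g W \<phi> \<eta>"
    unfolding coordinate_risk_def F_def by (simp only: W_even)
  finally show ?thesis .
qed

lemma tail_integral_reflect:
  assumes [measurable]: "g \<in> borel_measurable (borel \<Otimes>\<^sub>M borel)" "U \<in> borel_measurable borel"
  shows "tail_integral (\<lambda>z. g (- fst z, snd z)) (\<lambda>x. - U (- x)) (\<lambda>t. - \<psi> t) t
    = tail_integral g (\<lambda>x. - U x) \<psi> t"
proof -
  define F where "F s = ennreal (- U (s - \<psi> t)) * (\<integral>\<^sup>+y\<in>{..t}. ennreal (g (s, y)) \<partial>lborel)" for s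
  have [measurable]: "F \<in> borel_measurable borel"
    unfolding F_def by measurable
  have "tail_integral (\<lambda>z. g (- fst z, snd z)) (\<lambda>x. - U (- x)) (\<lambda>t. - \<psi> t) t = (\<integral>\<^sup>+s. F (- s) \<partial>lborel)"
    unfolding tail_integral_def F_def by (simp add: algebra_simps)
  also have "\<dots> = (\<integral>\<^sup>+s. F s \<partial>lborel)"
    by (rule nn_integral_lborel_reflect) measurable
  finally show ?thesis
    unfolding tail_integral_def F_def .
qed

lemma dint_pos_eq_tail_integral:
  assumes "AE x in lborel. V x = W' x"
  shows "dint_pos f W' \<psi> t = tail_integral (\<lambda>z. f (fst z, fst z + snd z)) V \<psi> t"
  unfolding dint_pos_def inner_int_def tail_integral_def
  using AE_lborel_translate[OF assms, of "- \<psi> t"] by (intro nn_integral_cong_AE) (auto simp: ennreal_max_0)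

lemma dint_neg_eq_tail_integral:
  assumes "AE x in lborel. V x = W' x"
  shows "dint_neg f W' \<psi> t = tail_integral (\<lambda>z. f (fst z, fst z + snd z)) (\<lambda>x. - V x) \<psi> t"
  unfolding dint_neg_def inner_int_def tail_integral_def
  using AE_lborel_translate[OF assms, of "- \<psi> t"] by (intro nn_integral_cong_AE) (auto simp: ennreal_max_0)

context bowl_loss
begin

lemma increment_fundamental:
  assumes "0 \<le> a"
  shows "ennreal (W s) + (\<integral>\<^sup>+c\<in>{0..a}. ennreal (- V (s - c)) \<partial>lborel)
    = ennreal (W (s - a)) + (\<integral>\<^sup>+c\<in>{0..a}. ennreal (V (s - c)) \<partial>lborel)"
  using nn_integral_deriv_fundamental[of "s - a" s] assms
    nn_integral_interval_reflect[where F = "\<lambda>u. ennreal (V u)" and a = a and s = s]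
    nn_integral_interval_reflect[where F = "\<lambda>u. ennreal (- V u)" and a = a and s = s]
  by (simp add: add.commute)

lemma coordinate_risk_increment_eq:
  assumes [measurable]: "g \<in> borel_measurable (borel \<Otimes>\<^sub>M borel)" "\<psi> \<in> borel_measurable borel"
    and "\<And>t. 0 \<le> \<psi> t"
  shows "coordinate_risk g W (\<lambda>_. 0) \<eta> + increment_integral g (\<lambda>x. - V x) \<psi> \<eta>
    = coordinate_risk g W \<psi> \<eta> + increment_integral g V \<psi> \<eta>"
proof -
  have "coordinate_risk g W (\<lambda>_. 0) \<eta> + increment_integral g (\<lambda>x. - V x) \<psi> \<eta> = (\<integral>\<^sup>+s. \<integral>\<^sup>+y.
      (ennreal (W s) + (\<integral>\<^sup>+c\<in>{0..\<psi> (\<eta> + y)}. ennreal (- V (s - c)) \<partial>lborel)) * ennreal (g (s, y))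
      \<partial>lborel \<partial>lborel)"
    unfolding coordinate_risk_def increment_integral_def distrib_right diff_zero
    by (rule nn_integral_lborel_iterated_add[symmetric]) measurable
  also have "\<dots> = (\<integral>\<^sup>+s. \<integral>\<^sup>+y.
      (ennreal (W (s - \<psi> (\<eta> + y))) + (\<integral>\<^sup>+c\<in>{0..\<psi> (\<eta> + y)}. ennreal (V (s - c)) \<partial>lborel))
      * ennreal (g (s, y)) \<partial>lborel \<partial>lborel)"
    using assms(3) by (simp add: increment_fundamental)
  also have "\<dots> = coordinate_risk g W \<psi> \<eta> + increment_integral g V \<psi> \<eta>"
    unfolding coordinate_risk_def increment_integral_def distrib_right
    by (rule nn_integral_lborel_iterated_add) measurable
  finally show ?thesis .
qed

lemma increment_integral_le_coordinate_risk:
  assumes "\<And>t. 0 \<le> \<psi> t"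
  shows "increment_integral g V \<psi> \<eta> \<le> coordinate_risk g W (\<lambda>_. 0) \<eta>"
  unfolding coordinate_risk_def increment_integral_def
proof (intro nn_integral_mono mult_right_mono)
  fix s y
  show "(\<integral>\<^sup>+c\<in>{0..\<psi> (\<eta> + y)}. ennreal (V (s - c)) \<partial>lborel) \<le> ennreal (W (s - 0))"
    using nn_integral_deriv_le[of "s - \<psi> (\<eta> + y)" s] assms
      nn_integral_interval_reflect[where F = "\<lambda>u. ennreal (V u)" and a = "\<psi> (\<eta> + y)" and s = s]
    by simp
qed simp

text \<open>The set of \<open>y\<close> with \<open>c \<le> \<psi> (\<eta> + y)\<close> is a down-set, and on each half-line \<open>{..t}\<close>
  inside it the comparison follows from the hypothesis at \<open>t\<close>, because \<open>c \<le> \<psi> t\<close> and \<open>V\<close> is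
  increasing.\<close>
lemma increment_slice_neg_le:
  assumes [measurable]: "g \<in> borel_measurable (borel \<Otimes>\<^sub>M borel)"
    and anti: "antimono \<psi>" and "0 \<le> \<eta>"
    and tail: "\<And>t. tail_integral g (\<lambda>x. - V x) \<psi> t \<le> tail_integral g V \<psi> t"
  shows "(\<integral>\<^sup>+s. (\<integral>\<^sup>+y\<in>{y. c \<le> \<psi> (\<eta> + y)}. ennreal (- V (s - c)) * ennreal (g (s, y)) \<partial>lborel) \<partial>lborel)
    \<le> (\<integral>\<^sup>+s. (\<integral>\<^sup>+y\<in>{y. c \<le> \<psi> (\<eta> + y)}. ennreal (V (s - c)) * ennreal (g (s, y)) \<partial>lborel) \<partial>lborel)"
proof (rule nn_integral_down_closed_le)
  show "y' \<in> {y. c \<le> \<psi> (\<eta> + y)}" if "y \<in> {y. c \<le> \<psi> (\<eta> + y)}" "y' \<le> y" for y y'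
    using that antimonoD[OF anti, of "\<eta> + y'" "\<eta> + y"] by auto
next
  fix t
  assume "t \<in> {y. c \<le> \<psi> (\<eta> + y)}"
  then have "c \<le> \<psi> t"
    using antimonoD[OF anti, of t "\<eta> + t"] \<open>0 \<le> \<eta>\<close> by auto
  then have V_le: "V (s - \<psi> t) \<le> V (s - c)" for s
    by (intro monoD[OF mono_deriv]) simp
  have "(\<integral>\<^sup>+s. (\<integral>\<^sup>+y\<in>{..t}. ennreal (- V (s - c)) * ennreal (g (s, y)) \<partial>lborel) \<partial>lborel)
      \<le> tail_integral g (\<lambda>x. - V x) \<psi> t"
    unfolding tail_integral_eq[OF assms(1)] using V_le
    by (intro nn_integral_mono mult_right_mono ennreal_leI) auto
  also have "\<dots> \<le> tail_integral g V \<psi> t"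
    by (rule tail)
  also have "\<dots> \<le> (\<integral>\<^sup>+s. (\<integral>\<^sup>+y\<in>{..t}. ennreal (V (s - c)) * ennreal (g (s, y)) \<partial>lborel) \<partial>lborel)"
    unfolding tail_integral_eq[OF assms(1)] using V_le
    by (intro nn_integral_mono mult_right_mono ennreal_leI) auto
  finally show "(\<integral>\<^sup>+s. (\<integral>\<^sup>+y\<in>{..t}. ennreal (- V (s - c)) * ennreal (g (s, y)) \<partial>lborel) \<partial>lborel)
      \<le> (\<integral>\<^sup>+s. (\<integral>\<^sup>+y\<in>{..t}. ennreal (V (s - c)) * ennreal (g (s, y)) \<partial>lborel) \<partial>lborel)" .
qed measurable

lemma increment_integral_neg_le:
  assumes [measurable]: "g \<in> borel_measurable (borel \<Otimes>\<^sub>M borel)"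
    and anti: "antimono \<psi>" and "0 \<le> \<eta>"
    and tail: "\<And>t. tail_integral g (\<lambda>x. - V x) \<psi> t \<le> tail_integral g V \<psi> t"
  shows "increment_integral g (\<lambda>x. - V x) \<psi> \<eta> \<le> increment_integral g V \<psi> \<eta>"
proof -
  have [measurable]: "\<psi> \<in> borel_measurable borel"
    using anti by (rule borel_measurable_antimono)
  have "(\<integral>\<^sup>+s. \<integral>\<^sup>+y. ennreal (- V (s - c)) * indicator {0..\<psi> (\<eta> + y)} c * ennreal (g (s, y))
      \<partial>lborel \<partial>lborel)
    \<le> (\<integral>\<^sup>+s. \<integral>\<^sup>+y. ennreal (V (s - c)) * indicator {0..\<psi> (\<eta> + y)} c * ennreal (g (s, y))
      \<partial>lborel \<partial>lborel)" for c
  proof (cases "0 \<le> c")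
    case True
    then show ?thesis
      using increment_slice_neg_le[OF assms, of c] by (simp add: indicator_def mult_ac)
  qed simp
  then show ?thesis
    by (simp add: increment_integral_rotate nn_integral_mono)
qed

lemma coordinate_risk_le:
  assumes g: "g \<in> borel_measurable (borel \<Otimes>\<^sub>M borel)"
    and anti: "antimono \<psi>" and nonneg: "\<And>t. 0 \<le> \<psi> t" and "0 \<le> \<eta>"
    and tail: "\<And>t. tail_integral g (\<lambda>x. - V x) \<psi> t \<le> tail_integral g V \<psi> t"
  shows "coordinate_risk g W \<psi> \<eta> \<le> coordinate_risk g W (\<lambda>_. 0) \<eta>"
proof (cases "coordinate_risk g W (\<lambda>_. 0) \<eta> = \<infinity>")
  case False
  have eq: "coordinate_risk g W (\<lambda>_. 0) \<eta> + increment_integral g (\<lambda>x. - V x) \<psi> \<eta>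
      = coordinate_risk g W \<psi> \<eta> + increment_integral g V \<psi> \<eta>"
    using coordinate_risk_increment_eq[OF g borel_measurable_antimono[OF anti] nonneg] .
  have "increment_integral g V \<psi> \<eta> \<le> coordinate_risk g W (\<lambda>_. 0) \<eta>"
    using nonneg by (rule increment_integral_le_coordinate_risk)
  then have "increment_integral g V \<psi> \<eta> \<noteq> \<infinity>"
    using False by (auto simp: top_unique)
  moreover have "coordinate_risk g W \<psi> \<eta> + increment_integral g V \<psi> \<eta>
      \<le> coordinate_risk g W (\<lambda>_. 0) \<eta> + increment_integral g V \<psi> \<eta>"
    unfolding eq[symmetric] using increment_integral_neg_le[OF g anti \<open>0 \<le> \<eta>\<close> tail] by (rule add_left_mono)
  ultimately show ?thesis
    by (simp add: ennreal_add_left_cancel_le add.commute)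
qed simp

text \<open>For an even loss, reflecting \<open>s\<close> turns an increasing \<open>\<psi> \<le> 0\<close> into the decreasing
  \<open>- \<psi> \<ge> 0\<close>.\<close>
lemma coordinate_risk_le_mono:
  assumes even: "\<And>t. W (- t) = W t" and g [measurable]: "g \<in> borel_measurable (borel \<Otimes>\<^sub>M borel)"
    and "mono \<psi>" and nonpos: "\<And>t. \<psi> t \<le> 0" and "0 \<le> \<eta>"
    and tail: "\<And>t. tail_integral g V \<psi> t \<le> tail_integral g (\<lambda>x. - V x) \<psi> t"
  shows "coordinate_risk g W \<psi> \<eta> \<le> coordinate_risk g W (\<lambda>_. 0) \<eta>"
proof -
  interpret reflected: bowl_loss W "\<lambda>x. - V (- x)"
    using bowl_loss_reflect[OF bowl_loss_axioms] even by simp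
  have [measurable]: "\<psi> \<in> borel_measurable borel"
    using \<open>mono \<psi>\<close> by (rule borel_measurable_mono)
  let ?g = "\<lambda>z. g (- fst z, snd z)"
  have "coordinate_risk g W \<psi> \<eta> = coordinate_risk ?g W (\<lambda>t. - \<psi> t) \<eta>"
    using even by (intro coordinate_risk_reflect[symmetric]) measurable
  also have "\<dots> \<le> coordinate_risk ?g W (\<lambda>_. 0) \<eta>"
  proof (rule reflected.coordinate_risk_le)
    show "antimono (\<lambda>t. - \<psi> t)"
      using \<open>mono \<psi>\<close> by (auto simp: mono_def antimono_def)
    show "tail_integral ?g (\<lambda>x. - (- V (- x))) (\<lambda>t. - \<psi> t) t
        \<le> tail_integral ?g (\<lambda>x. - V (- x)) (\<lambda>t. - \<psi> t) t" for t
      using tail[of t] tail_integral_reflect[OF g, of V \<psi> t]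
        tail_integral_reflect[OF g, of "\<lambda>x. - V x" \<psi> t] by simp
  qed (use nonpos \<open>0 \<le> \<eta>\<close> in auto)
  also have "\<dots> = coordinate_risk g W (\<lambda>_. 0) \<eta>"
    using even coordinate_risk_reflect[OF g borel_measurable, of "\<lambda>_. 0"] by simp
  finally show ?thesis .
qed


lemma coordinate_risk_le_dint:
  fixes f :: "real \<times> real \<Rightarrow> real"
  assumes V_ae: "AE x in lborel. V x = W' x" and [measurable]: "f \<in> borel_measurable (borel \<Otimes>\<^sub>M borel)"
    and even: "\<And>t. W (- t) = W t" and lim: "(\<psi> \<longlongrightarrow> 0) at_top" and "0 \<le> \<eta>"
    and cond: "(antimono \<psi> \<and> (\<forall>t. dint_nonneg f W' \<psi> t)) \<or> (mono \<psi> \<and> (\<forall>t. dint_nonpos f W' \<psi> t))"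
  defines "g \<equiv> \<lambda>z. f (fst z, fst z + snd z)"
  shows "coordinate_risk g W \<psi> \<eta> \<le> coordinate_risk g W (\<lambda>_. 0) \<eta>"
proof -
  have [measurable]: "g \<in> borel_measurable (borel \<Otimes>\<^sub>M borel)"
    unfolding g_def by measurable
  note tail_eqs = dint_pos_eq_tail_integral[OF V_ae] dint_neg_eq_tail_integral[OF V_ae]
  from cond show ?thesis
  proof (elim disjE conjE)
    assume "antimono \<psi>" "\<forall>t. dint_nonneg f W' \<psi> t"
    then show ?thesis
      using antimono_tendsto_at_top_le[OF _ lim] \<open>0 \<le> \<eta>\<close>
      by (intro coordinate_risk_le) (auto simp: dint_nonneg_def tail_eqs g_def)
  next
    assume "mono \<psi>" "\<forall>t. dint_nonpos f W' \<psi> t"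
    then show ?thesis
      using mono_tendsto_at_top_ge[OF _ lim] \<open>0 \<le> \<eta>\<close> even
      by (intro coordinate_risk_le_mono) (auto simp: dint_nonpos_def tail_eqs g_def)
  qed
qed

end

theorem theorem2p2p1:
  fixes f :: "real \<times> real \<Rightarrow> real"
    and W W' :: "real \<Rightarrow> real"
    and \<psi> :: "real \<Rightarrow> real"
    and \<theta> :: "real \<times> real"
  assumes f_nonneg: "\<And>z. f z \<ge> 0"
    and f_meas: "f \<in> borel_measurable lborel"
    and f_prob: "(\<integral>\<^sup>+ z. ennreal (f z) \<partial>lborel) = 1"
    and f_swap: "\<And>z1 z2. f (z1, z2) = f (z2, z1)"
    and f_neg: "\<And>z1 z2. f (z1, z2) = f (- z1, - z2)"
    and W_nonneg: "\<And>t. W t \<ge> 0"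
    and W_ac: "abs_cont W"
    and W_0: "W 0 = 0"
    and W_even: "\<And>t. W t = W (- t)"
    and W_dec: "\<And>s t. s < t \<Longrightarrow> t < 0 \<Longrightarrow> W t < W s"
    and W_inc: "\<And>s t. 0 < s \<Longrightarrow> s < t \<Longrightarrow> W s < W t"
    and W'_deriv: "AE t in lborel. (W has_real_derivative W' t) (at t)"
    and W'_mono_ae: "\<exists>N \<in> null_sets lborel. mono_on (- N) W'"
    and psi_lim: "(\<psi> \<longlongrightarrow> 0) at_top"
    and cond: "(antimono \<psi> \<and> (\<forall>t. dint_nonneg f W' \<psi> t)) \<or>
               (mono \<psi> \<and> (\<forall>t. dint_nonpos f W' \<psi> t))"
    and theta: "fst \<theta> \<le> snd \<theta>"
  shows "risk f W \<theta> (delta_psi \<psi>) \<le> risk f W \<theta> delta0"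
proof -
  obtain V where "bowl_loss W V" and V_ae: "AE x in lborel. V x = W' x"
    using bowl_loss_ae_mono_deriv[OF W_ac W_0 W_nonneg W_dec W_inc W'_deriv W'_mono_ae] by blast
  interpret bowl_loss W V
    by fact
  define g where "g = (\<lambda>z. f (fst z, fst z + snd z))"
  have f_meas': "f \<in> borel_measurable (borel \<Otimes>\<^sub>M borel)"
    using f_meas by (simp add: borel_prod)
  have \<psi>_meas: "\<psi> \<in> borel_measurable borel"
    using cond borel_measurable_mono borel_measurable_antimono by blast
  have "coordinate_risk g W \<psi> (snd \<theta> - fst \<theta>) \<le> coordinate_risk g W (\<lambda>_. 0) (snd \<theta> - fst \<theta>)"
    unfolding g_def using V_ae f_meas' W_even psi_lim theta cond by (intro coordinate_risk_le_dint) auto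
  moreover have "risk f W \<theta> (delta_psi \<psi>) = 2 * coordinate_risk g W \<psi> (snd \<theta> - fst \<theta>)"
    unfolding delta_psi_def[abs_def] Let_def g_def
    by (rule risk_eq_coordinate_risk[OF f_meas' borel_measurable \<psi>_meas f_swap f_neg W_nonneg W_even])
  moreover have "risk f W \<theta> delta0 = 2 * coordinate_risk g W (\<lambda>_. 0) (snd \<theta> - fst \<theta>)"
    using risk_eq_coordinate_risk[OF f_meas' borel_measurable _ f_swap f_neg W_nonneg W_even, of "\<lambda>_. 0"]
    unfolding delta0_def[abs_def] g_def by simp
  ultimately show ?thesis
    by (simp add: mult_left_mono)
qed

end
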